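(* Let $F\in SL(d,\mathbb{Z})$ be partially hyperbolic with invariant splitting $\mathbb{R}^d=S\oplus C\oplus U$. Then $F$ is Katznelson irreducible (i.e. $C\cap\mathbb{Z}^d=\{0\}$) if and only if there is no non-constant factor $\eta(x)\in\mathbb{Q}[x]$ of the characteristic polynomial of $F$ all of whose roots are eigenvalues of $F|_C$.
   Context: Partial hyperbolicity of $F$ with respect to the $F$-invariant linear splitting $S\oplus C\oplus U$: for some metric, $\|F|_S\|<1$, $m(F|_U)>1$, $\|F|_S\|<m(F|_C)$, $m(F|_U)>\|F|_C\|$, where $m$ denotes the conorm. *)

theory Defs
  imports "HOL-Analysis.Analysis" "HOL-Computational_Algebra.Polynomial"
begin

definition real_mat :: "int^'n^'n \<Rightarrow> real^'n^'n" where
  "real_mat F = (\<chi> i j. real_of_int (F $ i $ j))"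

definition int_lattice :: "(real^'n) set" where
  "int_lattice = range (\<lambda>z::int^'n. \<chi> i. real_of_int (z $ i))"

definition charpoly_rat :: "int^'n^'n \<Rightarrow> rat poly" where
  "charpoly_rat F = det (\<chi> i j. (if i = j then [:0, 1:] else 0) - [:rat_of_int (F $ i $ j):])"

text \<open>A metric on R^d: the norm induced by a positive definite symmetric matrix P
  (every inner product on R^d is of this form).\<close>
definition pos_def :: "real^'n^'n \<Rightarrow> bool" where
  "pos_def P \<longleftrightarrow> transpose P = P \<and> (\<forall>v. v \<noteq> 0 \<longrightarrow> v \<bullet> (P *v v) > 0)"

definition metric_norm :: "real^'n^'n \<Rightarrow> real^'n \<Rightarrow> real" where
  "metric_norm P v = sqrt (v \<bullet> (P *v v))"

definition norm_on :: "real^'n^'n \<Rightarrow> real^'n^'n \<Rightarrow> (real^'n) set \<Rightarrow> real" where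
  "norm_on P A V = Sup {metric_norm P (A *v v) | v. v \<in> V \<and> metric_norm P v = 1}"

definition conorm_on :: "real^'n^'n \<Rightarrow> real^'n^'n \<Rightarrow> (real^'n) set \<Rightarrow> real" where
  "conorm_on P A V = Inf {metric_norm P (A *v v) | v. v \<in> V \<and> metric_norm P v = 1}"

definition direct_sum3 :: "(real^'n) set \<Rightarrow> (real^'n) set \<Rightarrow> (real^'n) set \<Rightarrow> bool" where
  "direct_sum3 S C U \<longleftrightarrow> subspace S \<and> subspace C \<and> subspace U \<and>
     (\<forall>v. \<exists>!(s, c, u). s \<in> S \<and> c \<in> C \<and> u \<in> U \<and> v = s + c + u)"

definition invariant :: "real^'n^'n \<Rightarrow> (real^'n) set \<Rightarrow> bool" where
  "invariant A V \<longleftrightarrow> (\<forall>v\<in>V. A *v v \<in> V)"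

definition partially_hyperbolic ::
  "int^'n^'n \<Rightarrow> (real^'n) set \<Rightarrow> (real^'n) set \<Rightarrow> (real^'n) set \<Rightarrow> bool" where
  "partially_hyperbolic F S C U \<longleftrightarrow>
     direct_sum3 S C U \<and> S \<noteq> {0} \<and> U \<noteq> {0} \<and>
     invariant (real_mat F) S \<and> invariant (real_mat F) C \<and> invariant (real_mat F) U \<and>
     (\<exists>P. pos_def P \<and>
        norm_on P (real_mat F) S < 1 \<and>
        conorm_on P (real_mat F) U > 1 \<and>
        norm_on P (real_mat F) S < conorm_on P (real_mat F) C \<and>
        conorm_on P (real_mat F) U > norm_on P (real_mat F) C)"

text \<open>Complex eigenvalues of the restriction A|_V of a real linear map to an invariant
  real subspace V, i.e. eigenvalues of its complexification: A(v + i w) = mu(v + i w)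
  with v, w \<in> V not both zero.\<close>
definition eigenvalue_on :: "real^'n^'n \<Rightarrow> (real^'n) set \<Rightarrow> complex \<Rightarrow> bool" where
  "eigenvalue_on A V mu \<longleftrightarrow> (\<exists>v\<in>V. \<exists>w\<in>V. (v \<noteq> 0 \<or> w \<noteq> 0) \<and>
      A *v v = Re mu *\<^sub>R v - Im mu *\<^sub>R w \<and>
      A *v w = Im mu *\<^sub>R v + Re mu *\<^sub>R w)"

end

(*
  If a rational factor eta of the characteristic polynomial has only center eigenvalues as
  roots, take an eigenvector of F for a root of eta and apply a Q-linear functional from the
  complex numbers to Q to its coordinates: this gives a nonzero rational vector u with eta(F) u = 0. Partial
  hyperbolicity separates the spectrum of F on C from the spectra on S and U, so eta(F) is
  injective on S and U, hence u lies in C, and clearing denominators yields a lattice point.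

  Conversely, given a nonzero lattice point of C, pick a nonzero rational polynomial p of least
  degree with p(F) x = 0 for some nonzero rational vector x of the complexified center.
  Minimality makes p irreducible and every root of p an eigenvalue of F on C; an irreducible
  polynomial sharing a root with the characteristic polynomial divides it.
*)

theory Submission
  imports Defs
    "HOL-Computational_Algebra.Fundamental_Theorem_Algebra"
    "HOL-Computational_Algebra.Polynomial_Factorial"
    "HOL-Computational_Algebra.Field_as_Ring"
begin

section \<open>Polynomials and their action on vectors\<close>

lemma map_poly_of_rat_add: "map_poly of_rat (p + q) = map_poly of_rat p + map_poly of_rat q"
  by (rule poly_eqI) (simp add: coeff_map_poly of_rat_add)

lemma map_poly_of_rat_mult: "map_poly of_rat (p * q) = map_poly of_rat p * map_poly of_rat q"
  by (rule poly_eqI) (simp add: coeff_map_poly coeff_mult of_rat_sum of_rat_mult)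

lemma map_poly_of_rat_diff: "map_poly of_rat (p - q) = map_poly of_rat p - map_poly of_rat q"
  by (rule poly_eqI) (simp add: coeff_map_poly of_rat_diff)

lemma degree_map_poly_of_rat [simp]: "degree (map_poly of_rat p) = degree p"
  by (rule degree_map_poly) simp

definition poly_mat_vec :: "'a::comm_ring_1 poly \<Rightarrow> 'a^'n^'n \<Rightarrow> 'a^'n \<Rightarrow> 'a^'n" where
  "poly_mat_vec p A = fold_coeffs (\<lambda>a f x. a *s x + f (A *v x)) p (\<lambda>x. 0)"

lemma poly_mat_vec_0 [simp]: "poly_mat_vec 0 A x = 0"
  by (simp add: poly_mat_vec_def)

lemma poly_mat_vec_pCons [simp]:
  "poly_mat_vec (pCons a p) A x = a *s x + poly_mat_vec p A (A *v x)"
  by (cases "p = 0 \<and> a = 0") (auto simp add: poly_mat_vec_def)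

lemma matrix_vector_mult_scalar_commute:
  fixes A :: "'a::comm_ring_1^'n^'m"
  shows "A *v (c *s x) = c *s (A *v x)"
  by (simp add: vec_eq_iff matrix_vector_mult_def sum_distrib_left algebra_simps)

lemma poly_mat_vec_add: "poly_mat_vec (p + q) A x = poly_mat_vec p A x + poly_mat_vec q A x"
proof (induction p arbitrary: q x)
  case (pCons a p)
  then show ?case
    by (cases q) (simp add: vector_sadd_rdistrib add_ac)
qed simp

lemma poly_mat_vec_smult: "poly_mat_vec (smult c p) A x = c *s poly_mat_vec p A x"
  by (induction p arbitrary: x) (simp_all add: vector_add_ldistrib)

lemma poly_mat_vec_vec_add:
  "poly_mat_vec p A (x + y) = poly_mat_vec p A x + poly_mat_vec p A y"
  by (induction p arbitrary: x y) (simp_all add: matrix_vector_right_distrib algebra_simps)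

lemma poly_mat_vec_vec_scalar: "poly_mat_vec p A (c *s x) = c *s poly_mat_vec p A x"
  by (induction p arbitrary: x)
    (simp_all add: matrix_vector_mult_scalar_commute vector_add_ldistrib algebra_simps)

lemma poly_mat_vec_commute: "poly_mat_vec p A (A *v x) = A *v poly_mat_vec p A x"
  by (induction p arbitrary: x)
    (simp_all add: matrix_vector_right_distrib matrix_vector_mult_scalar_commute)

lemma poly_mat_vec_mult: "poly_mat_vec (p * q) A x = poly_mat_vec p A (poly_mat_vec q A x)"
  by (induction p arbitrary: x)
    (simp_all add: poly_mat_vec_add poly_mat_vec_smult poly_mat_vec_commute)

lemma poly_mat_vec_linear: "poly_mat_vec [:-z, 1:] A x = A *v x - z *s x"
  by (simp add: vec_eq_iff)

lemma poly_mat_vec_sum: "poly_mat_vec (\<Sum>i\<in>I. p i) A x = (\<Sum>i\<in>I. poly_mat_vec (p i) A x)"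
  by (induction I rule: infinite_finite_induct) (simp_all add: poly_mat_vec_add)

lemma poly_mat_vec_monom: "poly_mat_vec (monom c k) A x = c *s ((*v) A ^^ k) x"
  by (induction k arbitrary: x) (simp_all add: monom_0 monom_Suc funpow_swap1)

lemma poly_mat_vec_eigenvector:
  "A *v x = z *s x \<Longrightarrow> poly_mat_vec p A x = poly p z *s x"
  by (induction p arbitrary: x)
    (simp_all add: poly_mat_vec_vec_scalar algebra_simps vector_sadd_rdistrib)

section \<open>Eigenvalues are bounded by norm and conorm\<close>

lemma inner_mat_symmetric:
  fixes P :: "real^'n^'n"
  assumes "transpose P = P"
  shows "w \<bullet> (P *v v) = v \<bullet> (P *v w)"
  by (metis assms dot_lmul_matrix inner_commute transpose_matrix_vector)

lemma inner_mat_rotation: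
  fixes P :: "real^'n^'n"
  assumes "transpose P = P"
  shows "(a *\<^sub>R v - b *\<^sub>R w) \<bullet> (P *v (a *\<^sub>R v - b *\<^sub>R w))
       + (b *\<^sub>R v + a *\<^sub>R w) \<bullet> (P *v (b *\<^sub>R v + a *\<^sub>R w))
     = (a\<^sup>2 + b\<^sup>2) * (v \<bullet> (P *v v) + w \<bullet> (P *v w))"
  using inner_mat_symmetric[OF assms, of w v]
  by (simp add: matrix_vector_mult_diff_distrib matrix_vector_right_distrib
      matrix_vector_mult_scaleR inner_diff_left inner_diff_right inner_add_left inner_add_right
      power2_eq_square algebra_simps)

lemma pos_def_inner_nonneg: "pos_def P \<Longrightarrow> 0 \<le> v \<bullet> (P *v v)"
  by (cases "v = 0") (auto simp: pos_def_def intro: less_imp_le)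

lemma metric_norm_pos: "pos_def P \<Longrightarrow> v \<noteq> 0 \<Longrightarrow> 0 < metric_norm P v"
  by (simp add: metric_norm_def pos_def_def)

lemma metric_norm_nonneg: "pos_def P \<Longrightarrow> 0 \<le> metric_norm P v"
  by (simp add: metric_norm_def pos_def_inner_nonneg)

lemma metric_norm_power2: "pos_def P \<Longrightarrow> (metric_norm P v)\<^sup>2 = v \<bullet> (P *v v)"
  by (simp add: metric_norm_def pos_def_inner_nonneg)

lemma inner_mat_scaleR:
  fixes P :: "real^'n^'n"
  shows "(c *\<^sub>R v) \<bullet> (P *v (c *\<^sub>R v)) = c\<^sup>2 * (v \<bullet> (P *v v))"
  by (simp add: matrix_vector_mult_scaleR power2_eq_square)

lemma metric_norm_scaleR: "metric_norm P (c *\<^sub>R v) = \<bar>c\<bar> * metric_norm P v"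
  unfolding metric_norm_def inner_mat_scaleR by (simp add: real_sqrt_mult)

lemma pos_def_coercive:
  assumes "pos_def (P::real^'n^'n)"
  obtains c where "c > 0" "\<And>v. c * (norm v)\<^sup>2 \<le> v \<bullet> (P *v v)"
proof -
  have "continuous_on (sphere 0 1) (\<lambda>v::real^'n. v \<bullet> (P *v v))"
    by (intro continuous_intros linear_continuous_on) (simp add: matrix_vector_mul_linear)
  moreover have "sphere (0::real^'n) 1 \<noteq> {}" by simp
  ultimately obtain v0 where v0: "v0 \<in> sphere 0 1"
      "\<And>v. v \<in> sphere 0 1 \<Longrightarrow> v0 \<bullet> (P *v v0) \<le> v \<bullet> (P *v v)"
    using continuous_attains_inf[OF compact_sphere] by blast
  have "v0 \<noteq> 0" using v0(1) by auto
  then have "v0 \<bullet> (P *v v0) > 0"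
    using assms by (simp add: pos_def_def)
  moreover have "v0 \<bullet> (P *v v0) * (norm v)\<^sup>2 \<le> v \<bullet> (P *v v)" for v
  proof (cases "v = 0")
    case False
    have "v0 \<bullet> (P *v v0) \<le> (inverse (norm v) *\<^sub>R v) \<bullet> (P *v (inverse (norm v) *\<^sub>R v))"
      using False by (intro v0(2)) simp
    also have "\<dots> = (inverse (norm v))\<^sup>2 * (v \<bullet> (P *v v))"
      by (rule inner_mat_scaleR)
    finally show ?thesis
      using False by (simp add: power_inverse field_simps)
  qed simp
  ultimately show ?thesis using that by blast
qed

lemma bdd_above_metric_norm_image:
  fixes P A :: "real^'n^'n"
  assumes "pos_def P"
  shows "bdd_above {metric_norm P (A *v v) | v. v \<in> V \<and> metric_norm P v = 1}"
proof -
  obtain c where c: "c > 0" "\<And>v. c * (norm v)\<^sup>2 \<le> v \<bullet> (P *v v)"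
    using pos_def_coercive[OF assms] by blast
  let ?f = "\<lambda>v. metric_norm P (A *v v)"
  have "{?f v | v. v \<in> V \<and> metric_norm P v = 1} \<subseteq> ?f ` cball 0 (sqrt (1 / c))"
  proof clarify
    fix v assume "metric_norm P v = 1"
    then have "c * (norm v)\<^sup>2 \<le> 1"
      using c(2)[of v] metric_norm_power2[OF assms, of v] by simp
    then have "norm v \<le> sqrt (1 / c)"
      using c(1) by (simp add: real_le_rsqrt field_simps)
    then show "?f v \<in> ?f ` cball 0 (sqrt (1 / c))" by auto
  qed
  moreover have "continuous_on (cball 0 (sqrt (1 / c))) ?f"
    unfolding metric_norm_def
    by (intro continuous_intros linear_continuous_on)
      (simp_all add: linear_linear matrix_vector_mul_linear matrix_vector_mul_assoc)
  then have "bdd_above (?f ` cball 0 (sqrt (1 / c)))"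
    by (intro bounded_imp_bdd_above compact_imp_bounded compact_continuous_image compact_cball)
  ultimately show ?thesis by (rule bdd_above_mono[rotated])
qed

lemma unit_vector_in_subspace:
  assumes "pos_def P" "subspace V" "v \<in> V" "v \<noteq> 0"
  shows "v /\<^sub>R metric_norm P v \<in> V" "metric_norm P (v /\<^sub>R metric_norm P v) = 1"
  using assms metric_norm_pos[OF assms(1,4)]
  by (simp_all add: subspace_scale metric_norm_scaleR)

lemma metric_norm_le_norm_on:
  assumes "pos_def P" "subspace V" "v \<in> V"
  shows "metric_norm P (A *v v) \<le> norm_on P A V * metric_norm P v"
proof (cases "v = 0")
  case False
  let ?m = "metric_norm P v"
  have m: "?m > 0" using metric_norm_pos[OF assms(1) False] .
  have "metric_norm P (A *v (v /\<^sub>R ?m)) \<le> norm_on P A V"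
    unfolding norm_on_def using unit_vector_in_subspace[OF assms False]
    by (intro cSup_upper bdd_above_metric_norm_image[OF assms(1)]) blast
  with m show ?thesis
    by (simp add: matrix_vector_mult_scaleR metric_norm_scaleR field_simps)
qed (simp add: metric_norm_def)

lemma conorm_on_le_metric_norm:
  assumes "pos_def P" "subspace V" "v \<in> V"
  shows "conorm_on P A V * metric_norm P v \<le> metric_norm P (A *v v)"
proof (cases "v = 0")
  case False
  let ?m = "metric_norm P v"
  have m: "?m > 0" using metric_norm_pos[OF assms(1) False] .
  have "conorm_on P A V \<le> metric_norm P (A *v (v /\<^sub>R ?m))"
    unfolding conorm_on_def using unit_vector_in_subspace[OF assms False]
    by (intro cInf_lower) (auto intro: bdd_belowI[of _ 0] metric_norm_nonneg[OF assms(1)])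
  with m show ?thesis
    by (simp add: matrix_vector_mult_scaleR metric_norm_scaleR field_simps)
qed (simp add: metric_norm_def)

lemma eigenvalue_on_metric_norm:
  assumes "pos_def P" "eigenvalue_on A V z"
  obtains v w where "v \<in> V" "w \<in> V" "0 < metric_norm P v \<or> 0 < metric_norm P w"
    "(metric_norm P (A *v v))\<^sup>2 + (metric_norm P (A *v w))\<^sup>2
       = (cmod z)\<^sup>2 * ((metric_norm P v)\<^sup>2 + (metric_norm P w)\<^sup>2)"
proof -
  obtain v w where vw: "v \<in> V" "w \<in> V" "v \<noteq> 0 \<or> w \<noteq> 0"
    "A *v v = Re z *\<^sub>R v - Im z *\<^sub>R w" "A *v w = Im z *\<^sub>R v + Re z *\<^sub>R w"
    using assms(2) unfolding eigenvalue_on_def by blast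
  have "transpose P = P" using assms(1) by (simp add: pos_def_def)
  then have "(metric_norm P (A *v v))\<^sup>2 + (metric_norm P (A *v w))\<^sup>2
       = (cmod z)\<^sup>2 * ((metric_norm P v)\<^sup>2 + (metric_norm P w)\<^sup>2)"
    unfolding metric_norm_power2[OF assms(1)] vw(4,5) cmod_power2 by (rule inner_mat_rotation)
  moreover have "0 < metric_norm P v \<or> 0 < metric_norm P w"
    using vw(3) metric_norm_pos[OF assms(1)] by blast
  ultimately show ?thesis using that vw(1,2) by blast
qed

lemma eigenvalue_on_le_norm_on:
  assumes "pos_def P" "subspace V" "eigenvalue_on A V z"
  shows "cmod z \<le> norm_on P A V"
proof -
  let ?N = "norm_on P A V" and ?m = "metric_norm P"
  obtain v w where vw: "v \<in> V" "w \<in> V" "0 < ?m v \<or> 0 < ?m w"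
    "(?m (A *v v))\<^sup>2 + (?m (A *v w))\<^sup>2 = (cmod z)\<^sup>2 * ((?m v)\<^sup>2 + (?m w)\<^sup>2)"
    using eigenvalue_on_metric_norm[OF assms(1,3)] by blast
  have bound: "?m (A *v u) \<le> ?N * ?m u" if "u \<in> V" for u
    using metric_norm_le_norm_on[OF assms(1,2) that] .
  have N: "0 \<le> ?N"
  proof -
    obtain u where u: "u \<in> V" "0 < ?m u" using vw(1-3) by blast
    have "0 \<le> ?N * ?m u"
      using metric_norm_nonneg[OF assms(1)] bound[OF u(1)] by (rule order.trans)
    with u(2) show ?thesis by (simp add: zero_le_mult_iff)
  qed
  have sq: "(?m (A *v u))\<^sup>2 \<le> ?N\<^sup>2 * (?m u)\<^sup>2" if "u \<in> V" for u
  proof -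
    have "(?m (A *v u))\<^sup>2 \<le> (?N * ?m u)\<^sup>2"
      by (rule power_mono[OF bound[OF that] metric_norm_nonneg[OF assms(1)]])
    then show ?thesis by (simp add: power_mult_distrib)
  qed
  have "(cmod z)\<^sup>2 * ((?m v)\<^sup>2 + (?m w)\<^sup>2) = (?m (A *v v))\<^sup>2 + (?m (A *v w))\<^sup>2"
    using vw(4) by simp
  also have "\<dots> \<le> ?N\<^sup>2 * (?m v)\<^sup>2 + ?N\<^sup>2 * (?m w)\<^sup>2"
    using vw(1,2) by (intro add_mono sq)
  finally have "(cmod z)\<^sup>2 * ((?m v)\<^sup>2 + (?m w)\<^sup>2) \<le> ?N\<^sup>2 * ((?m v)\<^sup>2 + (?m w)\<^sup>2)"
    by (simp add: distrib_left)
  moreover have "0 < (?m v)\<^sup>2 + (?m w)\<^sup>2"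
    using vw(3) by (auto intro: add_pos_nonneg add_nonneg_pos)
  ultimately have "(cmod z)\<^sup>2 \<le> ?N\<^sup>2" by simp
  then show ?thesis using N by (rule power2_le_imp_le)
qed

lemma conorm_on_le_eigenvalue_on:
  assumes "pos_def P" "subspace V" "eigenvalue_on A V z"
  shows "conorm_on P A V \<le> cmod z"
proof (cases "0 \<le> conorm_on P A V")
  case True
  let ?c = "conorm_on P A V" and ?m = "metric_norm P"
  obtain v w where vw: "v \<in> V" "w \<in> V" "0 < ?m v \<or> 0 < ?m w"
    "(?m (A *v v))\<^sup>2 + (?m (A *v w))\<^sup>2 = (cmod z)\<^sup>2 * ((?m v)\<^sup>2 + (?m w)\<^sup>2)"
    using eigenvalue_on_metric_norm[OF assms(1,3)] by blast
  have sq: "?c\<^sup>2 * (?m u)\<^sup>2 \<le> (?m (A *v u))\<^sup>2" if "u \<in> V" for u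
  proof -
    have "(?c * ?m u)\<^sup>2 \<le> (?m (A *v u))\<^sup>2"
      using conorm_on_le_metric_norm[OF assms(1,2) that] True metric_norm_nonneg[OF assms(1)]
      by (intro power_mono) simp_all
    then show ?thesis by (simp add: power_mult_distrib)
  qed
  have "?c\<^sup>2 * ((?m v)\<^sup>2 + (?m w)\<^sup>2) = ?c\<^sup>2 * (?m v)\<^sup>2 + ?c\<^sup>2 * (?m w)\<^sup>2"
    by (simp add: distrib_left)
  also have "\<dots> \<le> (?m (A *v v))\<^sup>2 + (?m (A *v w))\<^sup>2"
    using vw(1,2) by (intro add_mono sq)
  finally have "?c\<^sup>2 * ((?m v)\<^sup>2 + (?m w)\<^sup>2) \<le> (cmod z)\<^sup>2 * ((?m v)\<^sup>2 + (?m w)\<^sup>2)"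
    using vw(4) by simp
  moreover have "0 < (?m v)\<^sup>2 + (?m w)\<^sup>2"
    using vw(3) by (auto intro: add_pos_nonneg add_nonneg_pos)
  ultimately have "?c\<^sup>2 \<le> (cmod z)\<^sup>2" by simp
  then show ?thesis by (rule power2_le_imp_le) simp
next
  case False
  then show ?thesis using norm_ge_zero[of z] by linarith
qed

lemma partially_hyperbolic_subspaces:
  assumes "partially_hyperbolic F S C U"
  shows "subspace S" "subspace C" "subspace U"
    "invariant (real_mat F) S" "invariant (real_mat F) C" "invariant (real_mat F) U"
  using assms unfolding partially_hyperbolic_def direct_sum3_def by auto

lemma partially_hyperbolic_center_spectrum_disjoint:
  assumes ph: "partially_hyperbolic F S C U" and center: "eigenvalue_on (real_mat F) C z"
  shows "\<not> eigenvalue_on (real_mat F) S z" "\<not> eigenvalue_on (real_mat F) U z"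
proof -
  obtain P where P: "pos_def P" "norm_on P (real_mat F) S < conorm_on P (real_mat F) C"
      "norm_on P (real_mat F) C < conorm_on P (real_mat F) U"
    using ph unfolding partially_hyperbolic_def by blast
  note subspaces = partially_hyperbolic_subspaces[OF ph]
  have "norm_on P (real_mat F) S < cmod z"
    using P(2) conorm_on_le_eigenvalue_on[OF P(1) subspaces(2) center] by linarith
  then show "\<not> eigenvalue_on (real_mat F) S z"
    using eigenvalue_on_le_norm_on[OF P(1) subspaces(1)] by fastforce
  have "cmod z < conorm_on P (real_mat F) U"
    using P(3) eigenvalue_on_le_norm_on[OF P(1) subspaces(2) center] by linarith
  then show "\<not> eigenvalue_on (real_mat F) U z"
    using conorm_on_le_eigenvalue_on[OF P(1) subspaces(3)] by fastforce
qed

section \<open>Complexification\<close>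

definition complex_mat :: "int^'n^'n \<Rightarrow> complex^'n^'n" where
  "complex_mat F = (\<chi> i j. of_int (F $ i $ j))"

definition complex_vec :: "real^'n \<Rightarrow> complex^'n" where
  "complex_vec v = (\<chi> i. complex_of_real (v $ i))"

definition Re_vec :: "complex^'n \<Rightarrow> real^'n" where
  "Re_vec x = (\<chi> i. Re (x $ i))"

definition Im_vec :: "complex^'n \<Rightarrow> real^'n" where
  "Im_vec x = (\<chi> i. Im (x $ i))"

definition complexification :: "(real^'n) set \<Rightarrow> (complex^'n) set" where
  "complexification V = {x. Re_vec x \<in> V \<and> Im_vec x \<in> V}"

lemma complex_vec_eq_iff: "x = y \<longleftrightarrow> Re_vec x = Re_vec y \<and> Im_vec x = Im_vec y"
  by (auto simp: Re_vec_def Im_vec_def vec_eq_iff complex_eq_iff)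

lemma Re_vec_simps [simp]:
  "Re_vec 0 = 0" "Re_vec (x + y) = Re_vec x + Re_vec y" "Re_vec (x - y) = Re_vec x - Re_vec y"
  "Re_vec (c *s x) = Re c *\<^sub>R Re_vec x - Im c *\<^sub>R Im_vec x" "Re_vec (complex_vec v) = v"
  by (simp_all add: Re_vec_def Im_vec_def complex_vec_def vec_eq_iff)

lemma Im_vec_simps [simp]:
  "Im_vec 0 = 0" "Im_vec (x + y) = Im_vec x + Im_vec y" "Im_vec (x - y) = Im_vec x - Im_vec y"
  "Im_vec (c *s x) = Im c *\<^sub>R Re_vec x + Re c *\<^sub>R Im_vec x" "Im_vec (complex_vec v) = 0"
  by (simp_all add: Re_vec_def Im_vec_def complex_vec_def vec_eq_iff)

lemma Re_vec_complex_mat [simp]: "Re_vec (complex_mat F *v x) = real_mat F *v Re_vec x"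
  by (simp add: Re_vec_def complex_mat_def real_mat_def vec_eq_iff matrix_vector_mult_def Re_sum)

lemma Im_vec_complex_mat [simp]: "Im_vec (complex_mat F *v x) = real_mat F *v Im_vec x"
  by (simp add: Im_vec_def complex_mat_def real_mat_def vec_eq_iff matrix_vector_mult_def Im_sum)

lemma complex_vec_eq_0_iff [simp]: "complex_vec v = 0 \<longleftrightarrow> v = 0"
  by (auto simp: complex_vec_def vec_eq_iff)

lemma complex_vec_add: "complex_vec (u + v) = complex_vec u + complex_vec v"
  by (simp add: complex_vec_def vec_eq_iff)

lemma complex_vec_in_complexification: "subspace V \<Longrightarrow> v \<in> V \<Longrightarrow> complex_vec v \<in> complexification V"
  by (simp add: complexification_def subspace_0)

lemma poly_mat_vec_complexification:
  assumes "subspace V" "invariant (real_mat F) V" "x \<in> complexification V"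
  shows "poly_mat_vec p (complex_mat F) x \<in> complexification V"
  using assms(3)
proof (induction p arbitrary: x)
  case 0
  then show ?case using assms(1) by (simp add: complexification_def subspace_0)
next
  case (pCons a p)
  have "complex_mat F *v x \<in> complexification V"
    using pCons.prems assms(2) by (simp add: complexification_def invariant_def)
  with pCons show ?case using assms(1)
    by (simp add: complexification_def subspace_add subspace_diff subspace_scale)
qed

lemma eigenvalue_on_iff_complex_eigenvector:
  "eigenvalue_on (real_mat F) V z \<longleftrightarrow>
     (\<exists>x\<in>complexification V. x \<noteq> 0 \<and> complex_mat F *v x = z *s x)"
proof
  assume "eigenvalue_on (real_mat F) V z"
  then obtain v w where vw: "v \<in> V" "w \<in> V" "v \<noteq> 0 \<or> w \<noteq> 0"
    "real_mat F *v v = Re z *\<^sub>R v - Im z *\<^sub>R w" "real_mat F *v w = Im z *\<^sub>R v + Re z *\<^sub>R w"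
    unfolding eigenvalue_on_def by blast
  define x where "x = (\<chi> i. Complex (v $ i) (w $ i))"
  have x: "Re_vec x = v" "Im_vec x = w"
    by (simp_all add: x_def Re_vec_def Im_vec_def vec_eq_iff)
  show "\<exists>x\<in>complexification V. x \<noteq> 0 \<and> complex_mat F *v x = z *s x"
  proof (intro bexI conjI)
    show "x \<in> complexification V" using x vw by (simp add: complexification_def)
    show "x \<noteq> 0" using x vw(3) by (auto simp: complex_vec_eq_iff[of x 0])
    show "complex_mat F *v x = z *s x" using x vw(4,5) by (simp add: complex_vec_eq_iff)
  qed
next
  assume "\<exists>x\<in>complexification V. x \<noteq> 0 \<and> complex_mat F *v x = z *s x"
  then obtain x where x: "x \<in> complexification V" "x \<noteq> 0" "complex_mat F *v x = z *s x"
    by blast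
  have "real_mat F *v Re_vec x = Re z *\<^sub>R Re_vec x - Im z *\<^sub>R Im_vec x"
    "real_mat F *v Im_vec x = Im z *\<^sub>R Re_vec x + Re z *\<^sub>R Im_vec x"
    using arg_cong[OF x(3), of Re_vec] arg_cong[OF x(3), of Im_vec] by simp_all
  moreover have "Re_vec x \<noteq> 0 \<or> Im_vec x \<noteq> 0"
    using x(2) by (auto simp: complex_vec_eq_iff[of x 0])
  ultimately show "eigenvalue_on (real_mat F) V z"
    using x(1) unfolding eigenvalue_on_def complexification_def by blast
qed

lemma poly_mat_vec_kernel_trivial:
  assumes "subspace V" "invariant (real_mat F) V" "p \<noteq> 0"
    and "\<And>z. poly p z = 0 \<Longrightarrow> \<not> eigenvalue_on (real_mat F) V z"
    and "y \<in> complexification V" "poly_mat_vec p (complex_mat F) y = 0"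
  shows "y = 0"
  using assms(3-6)
proof (induction "degree p" arbitrary: p y rule: less_induct)
  case less
  show ?case
  proof (cases "degree p = 0")
    case True
    then obtain c where p: "p = [:c:]" by (rule degree_eq_zeroE)
    then have "c \<noteq> 0" using less.prems(1) by simp
    then show ?thesis using less.prems(4) p by (simp add: vec_eq_iff)
  next
    case False
    then obtain z where z: "poly p z = 0"
      using alg_closed_imp_poly_has_root[of p] by auto
    then obtain q where q: "p = [:-z, 1:] * q" by (metis dvdE poly_eq_0_iff_dvd)
    have "q \<noteq> 0" using q less.prems(1) by auto
    then have "degree q < degree p" unfolding q by (subst degree_mult_eq) auto
    define w where "w = poly_mat_vec q (complex_mat F) y"
    have "w \<in> complexification V"
      unfolding w_def by (rule poly_mat_vec_complexification[OF assms(1,2) less.prems(3)])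
    moreover have "complex_mat F *v w - z *s w = 0"
      using less.prems(4) unfolding q poly_mat_vec_mult poly_mat_vec_linear w_def .
    then have "complex_mat F *v w = z *s w" by simp
    ultimately have "w = 0"
      using less.prems(2)[OF z] eigenvalue_on_iff_complex_eigenvector by blast
    then show ?thesis
      using less.hyps[OF \<open>degree q < degree p\<close> \<open>q \<noteq> 0\<close> _ less.prems(3)] less.prems(2) q w_def
      by auto
  qed
qed

section \<open>Rational linear functionals on the complex numbers\<close>

definition rat_linear :: "('a::field_char_0 \<Rightarrow> rat) \<Rightarrow> bool" where
  "rat_linear \<phi> \<longleftrightarrow> (\<forall>x y. \<phi> (x + y) = \<phi> x + \<phi> y) \<and> (\<forall>r x. \<phi> (of_rat r * x) = r * \<phi> x)"

lemma rat_linear_exists: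
  fixes c :: "'a::field_char_0"
  assumes "c \<noteq> 0"
  obtains \<phi> where "rat_linear \<phi>" "\<phi> c = 1"
proof -
  interpret rat_vs: vector_space_pair "\<lambda>r x. of_rat r * x :: 'a" "(*) :: rat \<Rightarrow> rat \<Rightarrow> rat"
    by unfold_locales (simp_all add: distrib_left distrib_right of_rat_add of_rat_mult)
  have indep: "rat_vs.vs1.independent {c}"
    using assms by (simp only: rat_vs.vs1.dependent_single) simp
  define \<phi> where "\<phi> = rat_vs.construct {c} (\<lambda>_. 1)"
  have "Vector_Spaces.linear (\<lambda>r x. of_rat r * x :: 'a) (*) \<phi>"
    unfolding \<phi>_def by (rule rat_vs.linear_construct[OF indep])
  then have "rat_linear \<phi>"
    unfolding rat_linear_def Vector_Spaces.linear_iff by blast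
  moreover have "\<phi> c = 1"
    unfolding \<phi>_def by (rule rat_vs.construct_basis[OF indep]) simp
  ultimately show ?thesis by (rule that)
qed

lemma rat_linear_0: "rat_linear \<phi> \<Longrightarrow> \<phi> 0 = 0"
  unfolding rat_linear_def by (metis add_cancel_right_right add_0)

lemma rat_linear_add: "rat_linear \<phi> \<Longrightarrow> \<phi> (x + y) = \<phi> x + \<phi> y"
  by (simp add: rat_linear_def)

lemma rat_linear_scale: "rat_linear \<phi> \<Longrightarrow> \<phi> (of_rat r * x) = r * \<phi> x"
  by (simp add: rat_linear_def)

lemma rat_linear_sum: "rat_linear \<phi> \<Longrightarrow> \<phi> (\<Sum>i\<in>I. f i) = (\<Sum>i\<in>I. \<phi> (f i))"
  by (induction I rule: infinite_finite_induct) (simp_all add: rat_linear_0 rat_linear_add)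

definition rat_vec :: "complex^'n \<Rightarrow> bool" where
  "rat_vec x \<longleftrightarrow> (\<forall>j. x $ j \<in> \<rat>)"

definition map_vec_rat :: "(complex \<Rightarrow> rat) \<Rightarrow> complex^'n \<Rightarrow> complex^'n" where
  "map_vec_rat \<phi> x = (\<chi> j. of_rat (\<phi> (x $ j)))"

lemma rat_vec_complex_mat: "rat_vec x \<Longrightarrow> rat_vec (complex_mat F *v x)"
  by (auto simp: rat_vec_def complex_mat_def matrix_vector_mult_def intro!: Rats_sum Rats_mult)

lemma rat_vec_poly_mat_vec:
  "rat_vec x \<Longrightarrow> rat_vec (poly_mat_vec (map_poly of_rat p) (complex_mat F) x)"
proof (induction p arbitrary: x)
  case (pCons a p)
  then have "rat_vec (poly_mat_vec (map_poly of_rat p) (complex_mat F) (complex_mat F *v x))"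
    by (simp add: rat_vec_complex_mat)
  with pCons.prems show ?case by (simp add: map_poly_pCons rat_vec_def)
qed (simp add: rat_vec_def)

lemma map_vec_rat_0: "rat_linear \<phi> \<Longrightarrow> map_vec_rat \<phi> 0 = 0"
  by (simp add: map_vec_rat_def vec_eq_iff rat_linear_0)

lemma map_vec_rat_add: "rat_linear \<phi> \<Longrightarrow> map_vec_rat \<phi> (x + y) = map_vec_rat \<phi> x + map_vec_rat \<phi> y"
  by (simp add: map_vec_rat_def vec_eq_iff rat_linear_add of_rat_add)

lemma map_vec_rat_scalar: "rat_linear \<phi> \<Longrightarrow> map_vec_rat \<phi> (of_rat r *s x) = of_rat r *s map_vec_rat \<phi> x"
  by (simp add: map_vec_rat_def vec_eq_iff rat_linear_scale of_rat_mult)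

lemma map_vec_rat_complex_mat:
  assumes "rat_linear \<phi>"
  shows "map_vec_rat \<phi> (complex_mat F *v x) = complex_mat F *v map_vec_rat \<phi> x"
proof -
  have "\<phi> (of_int k * y) = of_int k * \<phi> y" for k y
    using rat_linear_scale[OF assms, of "of_int k" y] by simp
  then show ?thesis using assms
    by (simp add: map_vec_rat_def vec_eq_iff complex_mat_def matrix_vector_mult_def
        rat_linear_sum of_rat_sum of_rat_mult)
qed

lemma map_vec_rat_poly_mat_vec:
  assumes "rat_linear \<phi>"
  shows "map_vec_rat \<phi> (poly_mat_vec (map_poly of_rat p) (complex_mat F) x)
       = poly_mat_vec (map_poly of_rat p) (complex_mat F) (map_vec_rat \<phi> x)"
  by (induction p arbitrary: x)
    (simp_all add: map_poly_pCons map_vec_rat_0 map_vec_rat_add map_vec_rat_scalar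
      map_vec_rat_complex_mat assms)

lemma map_vec_rat_poly_mat_vec_rat_vec:
  assumes "rat_linear \<phi>" "rat_vec x"
  shows "map_vec_rat \<phi> (poly_mat_vec q (complex_mat F) x)
       = poly_mat_vec (map_poly (of_rat \<circ> \<phi>) q) (complex_mat F) x"
  using assms(2)
proof (induction q arbitrary: x)
  case (pCons a q)
  have "map_vec_rat \<phi> (a *s x) = of_rat (\<phi> a) *s x"
  proof -
    have "of_rat (\<phi> (a * x $ j)) = of_rat (\<phi> a) * x $ j" for j
    proof -
      obtain r where r: "x $ j = of_rat r"
        using pCons.prems by (auto simp: rat_vec_def elim: Rats_cases)
      show ?thesis
        using rat_linear_scale[OF assms(1), of r a] by (simp add: r mult.commute of_rat_mult)
    qed
    then show ?thesis by (simp add: map_vec_rat_def vec_eq_iff)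
  qed
  then show ?case
    using pCons.IH[OF rat_vec_complex_mat[OF pCons.prems]]
    by (simp add: map_poly_pCons rat_linear_0 assms(1) map_vec_rat_add)
qed (simp add: map_vec_rat_0 assms(1))

section \<open>Lattice points in the center from a factor\<close>

lemma of_real_of_rat: "of_real (of_rat r) = (of_rat r :: 'a::real_field)"
  by (cases r) (simp add: of_rat_rat of_real_divide)

lemma rational_kernel_vector:
  assumes "x \<noteq> 0" "poly_mat_vec (map_poly of_rat \<eta>) (complex_mat F) x = 0"
  obtains u :: "real^'n" where "u \<noteq> 0" "\<forall>j. u $ j \<in> \<rat>"
    "poly_mat_vec (map_poly of_rat \<eta>) (complex_mat F) (complex_vec u) = 0"
proof -
  obtain j where "x $ j \<noteq> 0" using assms(1) by (auto simp: vec_eq_iff)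
  then obtain \<phi> where \<phi>: "rat_linear \<phi>" "\<phi> (x $ j) = 1" by (rule rat_linear_exists)
  define u where "u = (\<chi> i. real_of_rat (\<phi> (x $ i)))"
  have "complex_vec u = map_vec_rat \<phi> x"
    by (simp add: u_def complex_vec_def map_vec_rat_def vec_eq_iff of_real_of_rat)
  then have "poly_mat_vec (map_poly of_rat \<eta>) (complex_mat F) (complex_vec u) = 0"
    using map_vec_rat_poly_mat_vec[OF \<phi>(1), of \<eta> F x] assms(2) by (simp add: map_vec_rat_0 \<phi>(1))
  moreover have "u \<noteq> 0" using \<phi>(2) by (auto simp: u_def vec_eq_iff intro!: exI[of _ j])
  moreover have "\<forall>j. u $ j \<in> \<rat>" by (simp add: u_def)
  ultimately show ?thesis using that by blast
qed

lemma direct_sum3_eq_0: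
  fixes S C U :: "(real^'n) set"
  assumes "direct_sum3 S C U" "a \<in> S" "b \<in> C" "d \<in> U" "a + b + d = 0"
  shows "a = 0" "b = 0" "d = 0"
proof -
  let ?P = "\<lambda>(s, c, u). s \<in> S \<and> c \<in> C \<and> u \<in> U \<and> (0::real^'n) = s + c + u"
  have "\<exists>!t. ?P t" using assms(1) unfolding direct_sum3_def by blast
  moreover have "?P (0, 0, 0)" using assms(1) by (simp add: direct_sum3_def subspace_0)
  moreover have "?P (a, b, d)" using assms(2-5) by simp
  ultimately have "(a, b, d) = (0, 0, 0)" by blast
  then show "a = 0" "b = 0" "d = 0" by simp_all
qed

lemma direct_sum3_complexification_eq_0:
  assumes "direct_sum3 S C U" "a \<in> complexification S" "b \<in> complexification C"
    "d \<in> complexification U" "a + b + d = 0"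
  shows "a = 0" "d = 0"
proof -
  have "Re_vec a + Re_vec b + Re_vec d = 0" "Im_vec a + Im_vec b + Im_vec d = 0"
    using arg_cong[OF assms(5), of Re_vec] arg_cong[OF assms(5), of Im_vec] by simp_all
  then have "Re_vec a = 0 \<and> Re_vec d = 0" "Im_vec a = 0 \<and> Im_vec d = 0"
    using direct_sum3_eq_0[OF assms(1)] assms(2-4) by (auto simp: complexification_def)
  then show "a = 0" "d = 0" by (simp_all add: complex_vec_eq_iff)
qed

lemma kernel_subset_center:
  assumes ph: "partially_hyperbolic F S C U" and "\<eta> \<noteq> 0"
    and roots: "\<And>z. poly (map_poly of_rat \<eta>) z = 0 \<Longrightarrow> eigenvalue_on (real_mat F) C z"
    and kernel: "poly_mat_vec (map_poly of_rat \<eta>) (complex_mat F) (complex_vec u) = 0"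
  shows "u \<in> C"
proof -
  note subspaces = partially_hyperbolic_subspaces[OF ph]
  have ds: "direct_sum3 S C U" using ph by (simp add: partially_hyperbolic_def)
  then obtain s c t where sct: "s \<in> S" "c \<in> C" "t \<in> U" "u = s + c + t"
    unfolding direct_sum3_def by blast
  let ?p = "map_poly of_rat \<eta> :: complex poly"
  have "?p \<noteq> 0" using \<open>\<eta> \<noteq> 0\<close> by (simp add: map_poly_eq_0_iff)
  have "poly_mat_vec ?p (complex_mat F) (complex_vec s) \<in> complexification S"
    "poly_mat_vec ?p (complex_mat F) (complex_vec c) \<in> complexification C"
    "poly_mat_vec ?p (complex_mat F) (complex_vec t) \<in> complexification U"
    using subspaces sct(1-3)
    by (auto intro!: poly_mat_vec_complexification complex_vec_in_complexification)
  moreover have "poly_mat_vec ?p (complex_mat F) (complex_vec s)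
      + poly_mat_vec ?p (complex_mat F) (complex_vec c)
      + poly_mat_vec ?p (complex_mat F) (complex_vec t) = 0"
    using kernel by (simp add: sct(4) complex_vec_add poly_mat_vec_vec_add)
  ultimately have "poly_mat_vec ?p (complex_mat F) (complex_vec s) = 0"
    "poly_mat_vec ?p (complex_mat F) (complex_vec t) = 0"
    using direct_sum3_complexification_eq_0[OF ds] by blast+
  moreover have "\<not> eigenvalue_on (real_mat F) S z" "\<not> eigenvalue_on (real_mat F) U z"
    if "poly ?p z = 0" for z
    using partially_hyperbolic_center_spectrum_disjoint[OF ph roots[OF that]] by blast+
  ultimately have "complex_vec s = 0" "complex_vec t = 0"
    using poly_mat_vec_kernel_trivial[OF subspaces(1,4) \<open>?p \<noteq> 0\<close>]
      poly_mat_vec_kernel_trivial[OF subspaces(3,6) \<open>?p \<noteq> 0\<close>]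
      complex_vec_in_complexification subspaces sct(1,3)
    by blast+
  then show "u \<in> C" using sct by simp
qed

lemma int_lattice_iff:
  fixes v :: "real^'n"
  shows "v \<in> int_lattice \<longleftrightarrow> (\<forall>j. v $ j \<in> \<int>)"
proof
  assume "\<forall>j. v $ j \<in> \<int>"
  then have "v = (\<lambda>z::int^'n. \<chi> i. real_of_int (z $ i)) (\<chi> i. \<lfloor>v $ i\<rfloor>)"
    by (auto simp: vec_eq_iff elim!: Ints_cases)
  then show "v \<in> int_lattice" unfolding int_lattice_def by (rule ssubst) (rule rangeI)
qed (auto simp: int_lattice_def)

lemma rational_vector_lattice_multiple:
  assumes "subspace V" "u \<in> V" "u \<noteq> 0" "\<forall>j. u $ j \<in> \<rat>"
  shows "\<exists>w \<in> V \<inter> int_lattice. w \<noteq> 0"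
proof -
  have "\<forall>j. \<exists>d::int. d > 0 \<and> of_int d * u $ j \<in> \<int>"
  proof
    fix j
    obtain a b where "b > 0" "u $ j = of_int a / of_int b"
      using assms(4)[rule_format, of j] by (auto elim: Rats_cases')
    then show "\<exists>d::int. d > 0 \<and> of_int d * u $ j \<in> \<int>" by (intro exI[of _ b]) simp
  qed
  then obtain d where d: "\<And>j. d j > 0" "\<And>j. of_int (d j) * u $ j \<in> \<int>" by metis
  define D where "D = (\<Prod>j\<in>UNIV. d j)"
  have "of_int D * u $ j \<in> \<int>" for j
  proof -
    have "D = d j * (\<Prod>k\<in>UNIV - {j}. d k)"
      unfolding D_def by (simp add: prod.remove)
    then have "of_int D * u $ j = of_int (\<Prod>k\<in>UNIV - {j}. d k) * (of_int (d j) * u $ j)"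
      by (simp add: mult_ac)
    then show ?thesis by (simp only:) (intro Ints_mult Ints_of_int d(2))
  qed
  moreover have "D > 0" unfolding D_def using d(1) by (simp add: prod_pos)
  ultimately have "of_int D *\<^sub>R u \<in> V \<inter> int_lattice" "of_int D *\<^sub>R u \<noteq> 0"
    using assms(1-3) by (simp_all add: subspace_scale int_lattice_iff)
  then show ?thesis by blast
qed

lemma center_lattice_point_of_factor:
  assumes ph: "partially_hyperbolic F S C U" and "degree \<eta> > 0"
    and roots: "\<And>z. poly (map_poly of_rat \<eta>) z = 0 \<Longrightarrow> eigenvalue_on (real_mat F) C z"
  shows "\<exists>w \<in> C \<inter> int_lattice. w \<noteq> 0"
proof -
  obtain z where z: "poly (map_poly of_rat \<eta>) z = (0::complex)"
    using alg_closed_imp_poly_has_root[of "map_poly of_rat \<eta>"] assms(2) by auto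
  then obtain x where x: "x \<noteq> 0" "complex_mat F *v x = z *s x"
    using roots eigenvalue_on_iff_complex_eigenvector by blast
  then have "poly_mat_vec (map_poly of_rat \<eta>) (complex_mat F) x = 0"
    using z by (simp add: poly_mat_vec_eigenvector)
  then obtain u where u: "u \<noteq> 0" "\<forall>j. u $ j \<in> \<rat>"
      "poly_mat_vec (map_poly of_rat \<eta>) (complex_mat F) (complex_vec u) = 0"
    by (rule rational_kernel_vector[OF x(1)])
  have "\<eta> \<noteq> 0" using assms(2) by auto
  then have "u \<in> C" using kernel_subset_center[OF ph _ roots u(3)] by blast
  then show ?thesis
    using rational_vector_lattice_multiple partially_hyperbolic_subspaces(2)[OF ph] u(1,2) by blast
qed

section \<open>Minimal rational annihilators\<close>

lemma of_real_vector_scalar: "complex_of_real c *s (y::complex^'n) = c *\<^sub>R y"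
  unfolding vec_eq_iff vector_smult_component vector_scaleR_component by (simp add: scaleR_conv_of_real)

text \<open>The \<open>D + 1\<close> vectors \<open>A\<^sup>i x\<close>, \<open>i \<le> D\<close>, are linearly dependent over \<open>\<real>\<close>,
  where \<open>D\<close> is the real dimension of \<open>\<complex>\<^sup>n\<close>.\<close>

lemma poly_mat_vec_annihilator_exists:
  fixes A :: "complex^'n^'n"
  obtains q where "q \<noteq> 0" "poly_mat_vec q A x = 0"
proof -
  define f where "f i = ((*v) A ^^ i) x" for i
  define D where "D = DIM(complex^'n)"
  show ?thesis
  proof (cases "inj_on f {0..D}")
    case False
    then obtain i j where ij: "i \<noteq> j" "f i = f j" by (auto simp: inj_on_def)
    define q where "q = monom (1::complex) i + monom (-1) j"
    have "coeff q i = 1" using ij by (simp add: q_def)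
    then have "q \<noteq> 0" by auto
    moreover have "poly_mat_vec q A x = 0"
      by (simp add: q_def poly_mat_vec_add poly_mat_vec_monom f_def[symmetric] ij(2))
    ultimately show ?thesis by (rule that)
  next
    case True
    then have "card (f ` {0..D}) = D + 1" by (simp add: card_image)
    then have "dependent (f ` {0..D})" by (intro dependent_biggerset) (simp add: D_def)
    then obtain t u where tu: "finite t" "t \<subseteq> f ` {0..D}" "(\<Sum>v\<in>t. u v *\<^sub>R v) = 0"
        "\<exists>v\<in>t. u v \<noteq> 0"
      unfolding dependent_explicit by blast
    define c where "c v = (if v \<in> t then u v else 0)" for v
    define q where "q = (\<Sum>i\<in>{0..D}. monom (complex_of_real (c (f i))) i)"
    obtain i0 where i0: "i0 \<in> {0..D}" "f i0 \<in> t" "u (f i0) \<noteq> 0" using tu(2,4) by blast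
    have "coeff q i0 = complex_of_real (c (f i0))"
      unfolding q_def coeff_sum coeff_monom using i0(1) by (simp add: sum.delta)
    then have "q \<noteq> 0" using i0(2,3) by (auto simp: c_def)
    moreover have "poly_mat_vec q A x = 0"
    proof -
      have "poly_mat_vec q A x = (\<Sum>i\<in>{0..D}. c (f i) *\<^sub>R f i)"
        by (simp add: q_def poly_mat_vec_sum poly_mat_vec_monom f_def of_real_vector_scalar)
      also have "\<dots> = (\<Sum>v\<in>f ` {0..D}. c v *\<^sub>R v)"
        using sum.reindex[OF True, of "\<lambda>v. c v *\<^sub>R v"] by simp
      also have "\<dots> = (\<Sum>v\<in>t. c v *\<^sub>R v)"
        using tu(2) by (intro sum.mono_neutral_right) (auto simp: c_def)
      also have "\<dots> = 0" using tu(3) by (simp add: c_def)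
      finally show ?thesis .
    qed
    ultimately show ?thesis by (rule that)
  qed
qed

lemma rational_annihilator:
  assumes "rat_vec x" "q \<noteq> 0" "poly_mat_vec q (complex_mat F) x = 0"
  obtains p :: "rat poly" where "p \<noteq> 0" "degree p \<le> degree q"
    "poly_mat_vec (map_poly of_rat p) (complex_mat F) x = 0"
proof -
  obtain \<phi> where \<phi>: "rat_linear \<phi>" "\<phi> (lead_coeff q) = 1"
    using rat_linear_exists[of "lead_coeff q"] assms(2) by auto
  define p where "p = map_poly \<phi> q"
  have "coeff p (degree q) = 1" unfolding p_def using \<phi> by (simp add: coeff_map_poly rat_linear_0)
  then have "p \<noteq> 0" by auto
  moreover have "degree p \<le> degree q" unfolding p_def by (rule map_poly_degree_leq)
  moreover have "(map_poly of_rat p :: complex poly) = map_poly (of_rat \<circ> \<phi>) q"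
    unfolding p_def using \<phi>(1) by (simp add: map_poly_map_poly rat_linear_0)
  then have "poly_mat_vec (map_poly of_rat p) (complex_mat F) x = 0"
    using map_vec_rat_poly_mat_vec_rat_vec[OF \<phi>(1) assms(1), of q F] assms(3)
    by (simp add: map_vec_rat_0 \<phi>(1))
  ultimately show ?thesis by (rule that)
qed

definition rat_annihilates :: "int^'n^'n \<Rightarrow> (real^'n) set \<Rightarrow> rat poly \<Rightarrow> complex^'n \<Rightarrow> bool" where
  "rat_annihilates F V p x \<longleftrightarrow> p \<noteq> 0 \<and> rat_vec x \<and> x \<noteq> 0 \<and> x \<in> complexification V \<and>
     poly_mat_vec (map_poly of_rat p) (complex_mat F) x = 0"

definition min_rat_annihilator :: "int^'n^'n \<Rightarrow> (real^'n) set \<Rightarrow> rat poly \<Rightarrow> complex^'n \<Rightarrow> bool" where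
  "min_rat_annihilator F V p x \<longleftrightarrow> rat_annihilates F V p x \<and>
     (\<forall>q y. rat_annihilates F V q y \<longrightarrow> degree p \<le> degree q)"

lemma min_rat_annihilator_exists:
  assumes "subspace V" "w \<in> V \<inter> int_lattice" "w \<noteq> 0"
  obtains p x where "min_rat_annihilator F V p x"
proof -
  define x where "x = complex_vec w"
  have "rat_vec x"
    unfolding rat_vec_def
  proof
    fix j
    obtain k where "w $ j = of_int k" using assms(2) int_lattice_iff by (blast elim: Ints_cases)
    then show "x $ j \<in> \<rat>" by (simp add: x_def complex_vec_def)
  qed
  moreover have "x \<noteq> 0" "x \<in> complexification V"
    using assms by (simp_all add: x_def complex_vec_in_complexification)
  ultimately have x: "rat_vec x" "x \<noteq> 0" "x \<in> complexification V" by blast+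
  obtain q where "q \<noteq> 0" "poly_mat_vec q (complex_mat F) x = 0"
    by (rule poly_mat_vec_annihilator_exists)
  then obtain p where "rat_annihilates F V p x"
    using rational_annihilator[OF x(1)] x unfolding rat_annihilates_def by metis
  then obtain px where "rat_annihilates F V (fst px) (snd px)"
      "\<forall>qy. rat_annihilates F V (fst qy) (snd qy) \<longrightarrow> degree (fst px) \<le> degree (fst qy)"
    using ex_has_least_nat[of "\<lambda>px. rat_annihilates F V (fst px) (snd px)" "(p, x)" "degree \<circ> fst"]
    by auto
  then show ?thesis using that unfolding min_rat_annihilator_def by auto
qed

lemma min_rat_annihilator_degree_pos:
  assumes "min_rat_annihilator F V p x"
  shows "degree p > 0"
proof (rule ccontr)
  assume "\<not> degree p > 0"
  then obtain c where "p = [:c:]" by (metis degree_eq_zeroE gr0I)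
  with assms show False
    by (auto simp: min_rat_annihilator_def rat_annihilates_def map_poly_pCons vec_eq_iff)
qed

lemma min_rat_annihilator_roots:
  assumes V: "subspace V" "invariant (real_mat F) V" and min: "min_rat_annihilator F V p x"
    and z: "poly (map_poly of_rat p) z = 0"
  shows "eigenvalue_on (real_mat F) V z"
proof -
  have ann: "rat_annihilates F V p x" using min by (simp add: min_rat_annihilator_def)
  obtain q where q: "map_poly of_rat p = [:-z, 1:] * q"
    using z by (metis dvdE poly_eq_0_iff_dvd)
  have "q \<noteq> 0" using q ann by (auto simp: rat_annihilates_def map_poly_eq_0_iff)
  then have "degree q < degree p"
    using arg_cong[OF q, of degree] by (subst (asm) degree_mult_eq) auto
  define y where "y = poly_mat_vec q (complex_mat F) x"
  have "y \<noteq> 0"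
  proof
    assume "y = 0"
    then obtain p' where "p' \<noteq> 0" "degree p' \<le> degree q"
        "poly_mat_vec (map_poly of_rat p') (complex_mat F) x = 0"
      using rational_annihilator[of x q F] ann \<open>q \<noteq> 0\<close> by (auto simp: rat_annihilates_def y_def)
    then have "rat_annihilates F V p' x" using ann by (simp add: rat_annihilates_def)
    then show False
      using min \<open>degree p' \<le> degree q\<close> \<open>degree q < degree p\<close>
      by (auto simp: min_rat_annihilator_def dest: spec2)
  qed
  moreover have "y \<in> complexification V"
    unfolding y_def using ann V by (auto intro: poly_mat_vec_complexification simp: rat_annihilates_def)
  moreover have "complex_mat F *v y - z *s y = 0"
    using ann unfolding rat_annihilates_def q poly_mat_vec_mult poly_mat_vec_linear y_def by simp
  ultimately show ?thesis
    by (auto simp: eigenvalue_on_iff_complex_eigenvector)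
qed

text \<open>If \<open>p = g h\<close> properly, then either \<open>h(F)\<close> already kills \<open>x\<close> or \<open>g(F)\<close> kills
  the rational vector \<open>h(F) x\<close>; both contradict minimality.\<close>

lemma min_rat_annihilator_irreducible:
  assumes V: "subspace V" "invariant (real_mat F) V" and min: "min_rat_annihilator F V p x"
  shows "irreducible p"
proof (rule irreducibleI)
  have ann: "rat_annihilates F V p x" using min by (simp add: min_rat_annihilator_def)
  then show "p \<noteq> 0" by (simp add: rat_annihilates_def)
  show "\<not> is_unit p"
    using min_rat_annihilator_degree_pos[OF min] by (simp add: is_unit_iff_degree \<open>p \<noteq> 0\<close>)
  fix g h assume p: "p = g * h"
  show "is_unit g \<or> is_unit h"
  proof (rule ccontr)
    assume "\<not> (is_unit g \<or> is_unit h)"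
    moreover have "g \<noteq> 0" "h \<noteq> 0" using p \<open>p \<noteq> 0\<close> by auto
    ultimately have "degree g > 0" "degree h > 0" by (auto simp: is_unit_iff_degree)
    then have deg: "degree g < degree p" "degree h < degree p"
      using p \<open>g \<noteq> 0\<close> \<open>h \<noteq> 0\<close> by (simp_all add: degree_mult_eq)
    define y where "y = poly_mat_vec (map_poly of_rat h) (complex_mat F) x"
    have "rat_annihilates F V h x \<or> rat_annihilates F V g y"
    proof (cases "y = 0")
      case True
      then show ?thesis using ann \<open>h \<noteq> 0\<close> by (simp add: rat_annihilates_def y_def)
    next
      case False
      have "rat_vec y" "y \<in> complexification V"
        using ann V by (auto simp: rat_annihilates_def y_def
            intro: rat_vec_poly_mat_vec poly_mat_vec_complexification)
      moreover have "poly_mat_vec (map_poly of_rat g) (complex_mat F) y = 0"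
        using ann by (simp add: rat_annihilates_def y_def p map_poly_of_rat_mult poly_mat_vec_mult)
      ultimately show ?thesis using False \<open>g \<noteq> 0\<close> by (simp add: rat_annihilates_def)
    qed
    then show False
      using min deg by (auto simp: min_rat_annihilator_def dest: spec2)
  qed
qed

section \<open>Factors of the characteristic polynomial\<close>

lemma det_map_hom:
  fixes h :: "'a::comm_ring_1 \<Rightarrow> 'b::comm_ring_1"
  assumes h1: "h 1 = 1" and hadd: "\<And>x y. h (x + y) = h x + h y"
    and hmult: "\<And>x y. h (x * y) = h x * h y"
  shows "h (det A) = det (\<chi> i j. h (A $ i $ j))"
proof -
  have h0: "h 0 = 0" using hadd[of 0 0] by simp
  have "h (- x) = - h x" for x
    using hadd[of x "- x"] h0 by (metis add.right_inverse neg_eq_iff_add_eq_0)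
  then have hsign: "h (of_int (sign p)) = of_int (sign p)" for p :: "'n \<Rightarrow> 'n"
    by (simp add: sign_def h1)
  have hprod: "h (\<Prod>i\<in>I. f i) = (\<Prod>i\<in>I. h (f i))" for I and f :: "'n \<Rightarrow> 'a"
    by (induction I rule: infinite_finite_induct) (simp_all add: h1 hmult)
  show ?thesis
    unfolding det_def sum_comp_morphism[of h, OF h0 hadd, symmetric]
    by (simp add: hmult hsign hprod)
qed

lemma poly_map_poly_of_rat_charpoly_rat:
  "poly (map_poly of_rat (charpoly_rat F)) z = det (\<chi> i j. (if i = j then z else 0) - of_int (F $ i $ j))"
proof -
  let ?h = "\<lambda>p. poly (map_poly of_rat p) z"
  let ?M = "\<chi> i j. (if i = j then [:0, 1:] else 0) - [:rat_of_int (F $ i $ j):]"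
  have "?h (charpoly_rat F) = det (\<chi> i j. ?h (?M $ i $ j))"
    unfolding charpoly_rat_def
    by (rule det_map_hom) (simp_all add: map_poly_of_rat_add map_poly_of_rat_mult)
  also have "(\<chi> i j. ?h (?M $ i $ j)) = (\<chi> i j. (if i = j then z else 0) - of_int (F $ i $ j))"
    by (simp add: vec_eq_iff map_poly_of_rat_diff map_poly_pCons)
  finally show ?thesis .
qed

lemma charpoly_rat_root_of_eigenvector:
  fixes F :: "int^'n^'n"
  assumes "complex_mat F *v y = z *s y" "y \<noteq> 0"
  shows "poly (map_poly of_rat (charpoly_rat F)) z = 0"
proof -
  define N :: "complex^'n^'n" where "N = (\<chi> i j. (if i = j then z else 0) - of_int (F $ i $ j))"
  have "N *v y = z *s y - complex_mat F *v y"
    by (simp add: N_def complex_mat_def vec_eq_iff matrix_vector_mult_def sum_subtractf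
        left_diff_distrib if_distrib[of "\<lambda>t. t * _"] cong: if_cong)
  then have Ny: "N *v y = 0" using assms(1) by simp
  have "det N = 0"
  proof (rule ccontr)
    assume "det N \<noteq> 0"
    then obtain N' where "N' ** N = mat 1" using invertible_det_nz invertible_left_inverse by blast
    then have "y = N' *v (N *v y)" by (simp add: matrix_vector_mul_assoc)
    then show False using Ny assms(2) by simp
  qed
  then show ?thesis by (simp add: poly_map_poly_of_rat_charpoly_rat N_def)
qed

lemma irreducible_dvd_of_common_root:
  fixes p q :: "rat poly" and z :: complex
  assumes "irreducible p" "poly (map_poly of_rat p) z = 0" "poly (map_poly of_rat q) z = 0"
  shows "p dvd q"
proof (rule ccontr)
  assume "\<not> p dvd q"
  then have "coprime p q"
    by (rule prime_elem_imp_coprime[OF irreducible_imp_prime_elem[OF assms(1)]])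
  then have "fst (bezout_coefficients p q) * p + snd (bezout_coefficients p q) * q = 1"
    by (simp add: bezout_coefficients_fst_snd)
  then have "poly (map_poly of_rat (fst (bezout_coefficients p q) * p
      + snd (bezout_coefficients p q) * q)) z = (1::complex)"
    by simp
  with assms(2,3) show False by (simp add: map_poly_of_rat_add map_poly_of_rat_mult)
qed

lemma charpoly_factor_of_lattice_point:
  assumes V: "subspace V" "invariant (real_mat F) V" and w: "w \<in> V \<inter> int_lattice" "w \<noteq> 0"
  shows "\<exists>\<eta>. \<eta> dvd charpoly_rat F \<and> degree \<eta> > 0 \<and>
     (\<forall>z. poly (map_poly of_rat \<eta>) z = 0 \<longrightarrow> eigenvalue_on (real_mat F) V z)"
proof -
  obtain p x where min: "min_rat_annihilator F V p x"
    using min_rat_annihilator_exists[OF V(1) w] .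
  have roots: "eigenvalue_on (real_mat F) V z" if "poly (map_poly of_rat p) z = 0" for z
    using min_rat_annihilator_roots[OF V min that] .
  have "degree p > 0" by (rule min_rat_annihilator_degree_pos[OF min])
  then obtain z :: complex where z: "poly (map_poly of_rat p) z = 0"
    using alg_closed_imp_poly_has_root[of "map_poly of_rat p"] by auto
  then obtain y where "complex_mat F *v y = z *s y" "y \<noteq> 0"
    using roots eigenvalue_on_iff_complex_eigenvector by blast
  then have "p dvd charpoly_rat F"
    using irreducible_dvd_of_common_root[OF min_rat_annihilator_irreducible[OF V min] z]
      charpoly_rat_root_of_eigenvector by blast
  with \<open>degree p > 0\<close> roots show ?thesis by blast
qed

theorem lemma3p1:
  fixes F :: "int^'n^'n" and S C U :: "(real^'n) set"
  assumes "det F = 1"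
    and "partially_hyperbolic F S C U"
  shows "C \<inter> int_lattice = {0} \<longleftrightarrow>
    \<not> (\<exists>\<eta> :: rat poly. \<eta> dvd charpoly_rat F \<and> degree \<eta> > 0 \<and>
          (\<forall>z::complex. poly (map_poly of_rat \<eta>) z = 0 \<longrightarrow> eigenvalue_on (real_mat F) C z))"
proof -
  note subspaces = partially_hyperbolic_subspaces[OF assms(2)]
  have "0 \<in> C \<inter> int_lattice"
    using subspaces(2) by (simp add: subspace_0 int_lattice_iff)
  then have "C \<inter> int_lattice = {0} \<longleftrightarrow> \<not> (\<exists>w \<in> C \<inter> int_lattice. w \<noteq> 0)"
    by blast
  also have "\<dots> \<longleftrightarrow> \<not> (\<exists>\<eta> :: rat poly. \<eta> dvd charpoly_rat F \<and> degree \<eta> > 0 \<and>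
          (\<forall>z::complex. poly (map_poly of_rat \<eta>) z = 0 \<longrightarrow> eigenvalue_on (real_mat F) C z))"
    using center_lattice_point_of_factor[OF assms(2)]
      charpoly_factor_of_lattice_point[OF subspaces(2,5)] by blast
  finally show ?thesis .
qed

end
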